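(* Fix $\beta\ne0$. Let a learner use policies $\pi^1,\dots,\pi^K$ and maintain value estimates $V_1^k(s_1)$, and suppose $V_1^k(s_1)\ge V_1^{\pi^k}(s_1)$ for all $k\in[K]$. Then $$\mathcal{R}(K)\le\bar\psi_\beta\cdot\mathcal{E}(K).$$
   Context: Episodic finite-horizon MDP with horizon $H$, $K$ episodes, deterministic rewards $r_h\in[0,1]$, fixed initial state $s_1$. For a policy $\pi$ and $\beta\ne0$, $V_h^\pi(s)=\frac1\beta\log\mathbb{E}[e^{\beta\sum_{i=h}^H r_i(s_i,\pi_i(s_i))}\mid s_h=s]$, and $V_1^*=\sup_\pi V_1^\pi$. Regret $\mathcal{R}(K)=\sum_{k=1}^K(V_1^*-V_1^{\pi^k})(s_1)$; exponential regret $\mathcal{E}(K)=\frac1\beta\sum_{k=1}^K[e^{\beta V_1^*(s_1)}-e^{\beta V_1^{\pi^k}(s_1)}]$. Semi-normalizer $\bar\psi_\beta=1$ if $\beta>0$ and $\bar\psi_\beta=e^{-\beta H}$ if $\beta<0$. *)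

theory Defs
  imports "HOL-Probability.Probability"
begin

text \<open>Episodic MDP: transition kernels P h s a (a pmf over next states), deterministic
rewards r h s a, deterministic Markov policies pol h s. Steps are indexed h = 1..H.\<close>

text \<open>exp_val beta P r pol m h s = E[ exp(beta * sum_{i=h}^{h+m-1} r_i(s_i, pi_i(s_i))) | s_h = s ],
computed by conditioning on the first transition (Markov property).\<close>
fun exp_val :: "real \<Rightarrow> (nat \<Rightarrow> 's \<Rightarrow> 'a \<Rightarrow> 's pmf) \<Rightarrow> (nat \<Rightarrow> 's \<Rightarrow> 'a \<Rightarrow> real)
      \<Rightarrow> (nat \<Rightarrow> 's \<Rightarrow> 'a) \<Rightarrow> nat \<Rightarrow> nat \<Rightarrow> 's \<Rightarrow> real" where
  "exp_val beta P r pol 0 h s = 1"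
| "exp_val beta P r pol (Suc m) h s =
     exp (beta * r h s (pol h s)) *
     measure_pmf.expectation (P h s (pol h s)) (\<lambda>s'. exp_val beta P r pol m (Suc h) s')"

definition value_fn :: "real \<Rightarrow> nat \<Rightarrow> (nat \<Rightarrow> 's \<Rightarrow> 'a \<Rightarrow> 's pmf) \<Rightarrow> (nat \<Rightarrow> 's \<Rightarrow> 'a \<Rightarrow> real)
      \<Rightarrow> (nat \<Rightarrow> 's \<Rightarrow> 'a) \<Rightarrow> nat \<Rightarrow> 's \<Rightarrow> real" where
  "value_fn beta H P r pol h s = ln (exp_val beta P r pol (H + 1 - h) h s) / beta"

definition opt_value :: "real \<Rightarrow> nat \<Rightarrow> (nat \<Rightarrow> 's \<Rightarrow> 'a \<Rightarrow> 's pmf) \<Rightarrow> (nat \<Rightarrow> 's \<Rightarrow> 'a \<Rightarrow> real)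
      \<Rightarrow> nat \<Rightarrow> 's \<Rightarrow> real" where
  "opt_value beta H P r h s = (SUP pol. value_fn beta H P r pol h s)"

definition regret :: "real \<Rightarrow> nat \<Rightarrow> (nat \<Rightarrow> 's \<Rightarrow> 'a \<Rightarrow> 's pmf) \<Rightarrow> (nat \<Rightarrow> 's \<Rightarrow> 'a \<Rightarrow> real)
      \<Rightarrow> 's \<Rightarrow> (nat \<Rightarrow> nat \<Rightarrow> 's \<Rightarrow> 'a) \<Rightarrow> nat \<Rightarrow> real" where
  "regret beta H P r s1 pols K =
     (\<Sum>k=1..K. opt_value beta H P r 1 s1 - value_fn beta H P r (pols k) 1 s1)"

definition exp_regret :: "real \<Rightarrow> nat \<Rightarrow> (nat \<Rightarrow> 's \<Rightarrow> 'a \<Rightarrow> 's pmf) \<Rightarrow> (nat \<Rightarrow> 's \<Rightarrow> 'a \<Rightarrow> real)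
      \<Rightarrow> 's \<Rightarrow> (nat \<Rightarrow> nat \<Rightarrow> 's \<Rightarrow> 'a) \<Rightarrow> nat \<Rightarrow> real" where
  "exp_regret beta H P r s1 pols K =
     (1 / beta) * (\<Sum>k=1..K. exp (beta * opt_value beta H P r 1 s1)
                              - exp (beta * value_fn beta H P r (pols k) 1 s1))"

definition semi_normalizer :: "real \<Rightarrow> nat \<Rightarrow> real" where
  "semi_normalizer beta H = (if beta > 0 then 1 else exp (- beta * real H))"

end

theory Submission
  imports Defs
begin

text \<open>Rewards lie in [0, 1], so every value lies in [0, H], and on that interval the map
  t \<mapsto> exp (\<beta> t) / \<beta> has derivative exp (\<beta> t) \<ge> 1 / \<psi>, where \<psi> is the semi-normalizer.
  By convexity of exp, each term V* - V^(\<pi>_k) of the regret is therefore at most \<psi> times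
  the corresponding term of the exponential regret.\<close>

lemma exp_val_bounds:
  assumes r: "\<And>h s a. 0 \<le> r h s a \<and> r h s a \<le> 1"
  shows "exp (min 0 (beta * real m)) \<le> exp_val beta P r pol m h s
       \<and> exp_val beta P r pol m h s \<le> exp (max 0 (beta * real m))"
proof (induction m arbitrary: h s)
  case 0
  then show ?case by simp
next
  case (Suc m)
  define M where "M = measure_pmf (P h s (pol h s))"
  define f where "f = exp_val beta P r pol m (Suc h)"
  have f_lower: "exp (min 0 (beta * real m)) \<le> f s'" and f_upper: "f s' \<le> exp (max 0 (beta * real m))" for s'
    using Suc.IH unfolding f_def by auto
  have "integrable M f"
    unfolding M_def
  proof (rule measure_pmf.integrable_const_bound)
    show "AE s' in P h s (pol h s). norm (f s') \<le> exp (max 0 (beta * real m))"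
      using f_lower f_upper order_trans[OF exp_ge_zero f_lower] by auto
  qed simp
  then have E_lower: "exp (min 0 (beta * real m)) \<le> integral\<^sup>L M f"
    and E_upper: "integral\<^sup>L M f \<le> exp (max 0 (beta * real m))"
    unfolding M_def
    by (auto intro: measure_pmf.integral_ge_const measure_pmf.integral_le_const f_lower f_upper)
  define x where "x = r h s (pol h s)"
  have "min 0 beta \<le> beta * x \<and> beta * x \<le> max 0 beta"
    using r[of h s "pol h s"] unfolding x_def
    by (cases "beta \<ge> 0") (auto simp: mult_left_le mult_nonpos_nonneg mult_le_cancel_left1)
  then have step_lower: "exp (min 0 beta) \<le> exp (beta * x)"
    and step_upper: "exp (beta * x) \<le> exp (max 0 beta)" by auto
  have min_add: "min 0 (beta * real (Suc m)) = min 0 beta + min 0 (beta * real m)"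
    and max_add: "max 0 (beta * real (Suc m)) = max 0 beta + max 0 (beta * real m)"
    using mult_nonpos_nonneg[of beta "real m"] by (cases "beta \<ge> 0"; auto simp: algebra_simps)+
  have "exp_val beta P r pol (Suc m) h s = exp (beta * x) * integral\<^sup>L M f"
    by (simp add: M_def f_def x_def)
  moreover have "exp (min 0 beta) * exp (min 0 (beta * real m)) \<le> exp (beta * x) * integral\<^sup>L M f"
    using step_lower E_lower by (intro mult_mono) auto
  moreover have "exp (beta * x) * integral\<^sup>L M f \<le> exp (max 0 beta) * exp (max 0 (beta * real m))"
    using step_upper E_upper order_trans[OF exp_ge_zero E_lower] by (intro mult_mono) auto
  ultimately show ?case
    unfolding min_add max_add exp_add by simp
qed

lemma value_fn_bounds:
  assumes "beta \<noteq> 0" and "\<And>h s a. 0 \<le> r h s a \<and> r h s a \<le> 1"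
  shows "0 \<le> value_fn beta H P r pol h s \<and> value_fn beta H P r pol h s \<le> real (H + 1 - h)"
proof -
  define m where "m = H + 1 - h"
  define e where "e = exp_val beta P r pol m h s"
  have e_bounds: "exp (min 0 (beta * real m)) \<le> e" "e \<le> exp (max 0 (beta * real m))"
    using exp_val_bounds[where r = r, OF assms(2)] unfolding e_def by auto
  then have "0 < e"
    using exp_gt_zero less_le_trans by blast
  then have "min 0 (beta * real m) \<le> ln e" "ln e \<le> max 0 (beta * real m)"
    using e_bounds by (metis ln_exp ln_le_cancel_iff exp_gt_zero)+
  then have "0 \<le> ln e / beta \<and> ln e / beta \<le> real m"
    using \<open>beta \<noteq> 0\<close> mult_nonpos_nonneg[of beta "real m"]
    by (cases "beta > 0")
       (auto simp: pos_divide_le_eq neg_divide_le_eq divide_nonpos_neg zero_le_divide_iff mult.commute)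
  then show ?thesis
    by (simp add: value_fn_def e_def m_def)
qed

lemma
  assumes "beta \<noteq> 0" and "\<And>h s a. 0 \<le> r h s a \<and> r h s a \<le> 1"
  shows value_fn_le_opt_value: "value_fn beta H P r pol h s \<le> opt_value beta H P r h s"
    and opt_value_le: "opt_value beta H P r h s \<le> real (H + 1 - h)"
proof -
  have bounds: "\<And>pol. 0 \<le> value_fn beta H P r pol h s \<and> value_fn beta H P r pol h s \<le> real (H + 1 - h)"
    using value_fn_bounds[where r = r, OF assms] by blast
  then have "bdd_above (range (\<lambda>pol. value_fn beta H P r pol h s))"
    by (intro bdd_aboveI2) blast
  then show "value_fn beta H P r pol h s \<le> opt_value beta H P r h s"
    unfolding opt_value_def by (rule cSUP_upper[rotated]) simp
  show "opt_value beta H P r h s \<le> real (H + 1 - h)"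
    unfolding opt_value_def by (rule cSUP_least) (use bounds in auto)
qed

lemma exp_secant_ge:
  fixes beta x y c :: real
  assumes "beta \<noteq> 0" "y \<le> x" "c \<le> exp (beta * x)" "c \<le> exp (beta * y)"
  shows "c * (x - y) \<le> (exp (beta * x) - exp (beta * y)) / beta"
proof -
  have tangent: "exp a * (b - a) \<le> exp b - exp a" for a b :: real
    using exp_ge_add_one_self[of "b - a"] by (simp add: exp_diff field_simps)
  show ?thesis
  proof (cases "beta > 0")
    case True
    have "c * (x - y) \<le> exp (beta * y) * (x - y)"
      using assms by (intro mult_right_mono) auto
    also have "\<dots> \<le> (exp (beta * x) - exp (beta * y)) / beta"
    proof -
      have "exp (beta * y) * (x - y) * beta \<le> exp (beta * x) - exp (beta * y)"
        using tangent[of "beta * y" "beta * x"] by (simp add: algebra_simps)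
      then show ?thesis using True by (simp add: pos_le_divide_eq)
    qed
    finally show ?thesis .
  next
    case False
    then have "beta < 0" using assms(1) by simp
    have "c * (x - y) \<le> exp (beta * x) * (x - y)"
      using assms by (intro mult_right_mono) auto
    also have "\<dots> \<le> (exp (beta * x) - exp (beta * y)) / beta"
    proof -
      have "exp (beta * x) - exp (beta * y) \<le> exp (beta * x) * (x - y) * beta"
        using tangent[of "beta * x" "beta * y"] by (simp add: algebra_simps)
      then show ?thesis using \<open>beta < 0\<close> by (simp add: neg_le_divide_eq)
    qed
    finally show ?thesis .
  qed
qed

lemma inverse_semi_normalizer_le_exp:
  assumes "0 \<le> t" "t \<le> real H"
  shows "1 / semi_normalizer beta H \<le> exp (beta * t)"
proof (cases "beta > 0")
  case True
  then show ?thesis using assms by (simp add: semi_normalizer_def)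
next
  case False
  then have "beta * real H \<le> beta * t"
    using assms by (simp add: mult_left_mono_neg)
  then show ?thesis
    using False by (simp add: semi_normalizer_def exp_minus inverse_eq_divide)
qed

lemma diff_le_semi_normalizer_mult_exp_diff:
  fixes beta x y :: real
  assumes "beta \<noteq> 0" "0 \<le> y" "y \<le> x" "x \<le> real H"
  shows "x - y \<le> semi_normalizer beta H * ((1 / beta) * (exp (beta * x) - exp (beta * y)))"
proof -
  have "0 < semi_normalizer beta H"
    by (simp add: semi_normalizer_def)
  moreover have "1 / semi_normalizer beta H * (x - y) \<le> (exp (beta * x) - exp (beta * y)) / beta"
    using assms by (intro exp_secant_ge inverse_semi_normalizer_le_exp) auto
  ultimately show ?thesis
    by (simp add: field_simps)
qed

theorem lemma11:
  fixes beta :: real and H K :: nat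
    and P :: "nat \<Rightarrow> 's \<Rightarrow> 'a \<Rightarrow> 's pmf" and r :: "nat \<Rightarrow> 's \<Rightarrow> 'a \<Rightarrow> real"
    and s1 :: 's and pols :: "nat \<Rightarrow> nat \<Rightarrow> 's \<Rightarrow> 'a" and Vest :: "nat \<Rightarrow> real"
  assumes "beta \<noteq> 0"
    and "\<And>h s a. 0 \<le> r h s a \<and> r h s a \<le> 1"
    and "\<And>k. k \<in> {1..K} \<Longrightarrow> Vest k \<ge> value_fn beta H P r (pols k) 1 s1"
  shows "regret beta H P r s1 pols K \<le> semi_normalizer beta H * exp_regret beta H P r s1 pols K"
proof -
  note value_bounds = value_fn_bounds[where r = r and h = 1, OF assms(1,2)]
    and opt_bounds = value_fn_le_opt_value[where r = r, OF assms(1,2)]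
      opt_value_le[where r = r and h = 1, OF assms(1,2)]
  have "regret beta H P r s1 pols K
      \<le> (\<Sum>k=1..K. semi_normalizer beta H * ((1 / beta) *
           (exp (beta * opt_value beta H P r 1 s1) - exp (beta * value_fn beta H P r (pols k) 1 s1))))"
    unfolding regret_def
    by (intro sum_mono diff_le_semi_normalizer_mult_exp_diff) (use assms(1) value_bounds opt_bounds in auto)
  also have "\<dots> = semi_normalizer beta H * exp_regret beta H P r s1 pols K"
    by (simp add: exp_regret_def sum_distrib_left)
  finally show ?thesis .
qed

end
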